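(* Let $\mathcal{B}$ be a spherical building of infinite thickness. Then there exists a chamber $C$ of $\mathcal{B}$ such that $\mathrm{Opp}(C)$ contains an apartment of $\mathcal{B}$.
   Context: A spherical building has infinite thickness if every codimension-one simplex (panel) is contained in infinitely many chambers. $\mathrm{Opp}(C)$ is the subcomplex of chambers opposite to $C$ (and their faces); two chambers are opposite if they lie on opposite sides of every wall in an apartment containing both. *)

theory Defs
  imports "HOL-Algebra.Algebra"
begin

text \<open>Buildings are treated via the W-metric approach (Abramenko--Brown, Ch. 5):
a building of type (W,S) is a set of chambers with a Weyl distance.\<close>

definition wprod :: "('w, 'm) monoid_scheme \<Rightarrow> 'w list \<Rightarrow> 'w" where
  "wprod G xs = foldr (\<lambda>s acc. s \<otimes>\<^bsub>G\<^esub> acc) xs \<one>\<^bsub>G\<^esub>"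

definition cox_len :: "('w, 'm) monoid_scheme \<Rightarrow> 'w set \<Rightarrow> 'w \<Rightarrow> nat" where
  "cox_len G S w = (LEAST n. \<exists>xs. set xs \<subseteq> S \<and> length xs = n \<and> wprod G xs = w)"

text \<open>Coxeter system, characterised by the exchange condition
(Abramenko--Brown, Thm 2.16 / Bourbaki).\<close>
definition coxeter_system :: "('w, 'm) monoid_scheme \<Rightarrow> 'w set \<Rightarrow> bool" where
  "coxeter_system G S \<longleftrightarrow>
     group G \<and> S \<subseteq> carrier G \<and> \<one>\<^bsub>G\<^esub> \<notin> S \<and>
     (\<forall>s\<in>S. s \<otimes>\<^bsub>G\<^esub> s = \<one>\<^bsub>G\<^esub>) \<and>
     generate G S = carrier G \<and>
     (\<forall>xs s. set xs \<subseteq> S \<longrightarrow> length xs = cox_len G S (wprod G xs) \<longrightarrow> s \<in> S \<longrightarrow>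
        cox_len G S (s \<otimes>\<^bsub>G\<^esub> wprod G xs) \<le> length xs \<longrightarrow>
        (\<exists>i < length xs. s \<otimes>\<^bsub>G\<^esub> wprod G xs = wprod G (take i xs @ drop (Suc i) xs)))"

text \<open>Building of type (W,S) with chamber set Ch and Weyl distance delta
(axioms WD1--WD3 of Abramenko--Brown, Def. 5.1).\<close>
definition w_building ::
  "('w, 'm) monoid_scheme \<Rightarrow> 'w set \<Rightarrow> 'c set \<Rightarrow> ('c \<Rightarrow> 'c \<Rightarrow> 'w) \<Rightarrow> bool" where
  "w_building G S Ch \<delta> \<longleftrightarrow>
     coxeter_system G S \<and>
     (\<forall>C\<in>Ch. \<forall>D\<in>Ch. \<delta> C D \<in> carrier G) \<and>
     (\<forall>C\<in>Ch. \<forall>D\<in>Ch. \<delta> C D = \<one>\<^bsub>G\<^esub> \<longleftrightarrow> C = D) \<and>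
     (\<forall>C\<in>Ch. \<forall>D\<in>Ch. \<forall>C'\<in>Ch. \<forall>s\<in>S. \<delta> C' C = s \<longrightarrow>
        (\<delta> C' D = s \<otimes>\<^bsub>G\<^esub> \<delta> C D \<or> \<delta> C' D = \<delta> C D) \<and>
        (cox_len G S (s \<otimes>\<^bsub>G\<^esub> \<delta> C D) = cox_len G S (\<delta> C D) + 1 \<longrightarrow>
           \<delta> C' D = s \<otimes>\<^bsub>G\<^esub> \<delta> C D)) \<and>
     (\<forall>C\<in>Ch. \<forall>D\<in>Ch. \<forall>s\<in>S. \<exists>C'\<in>Ch. \<delta> C' C = s \<and> \<delta> C' D = s \<otimes>\<^bsub>G\<^esub> \<delta> C D)"

definition spherical_building ::
  "('w, 'm) monoid_scheme \<Rightarrow> 'w set \<Rightarrow> 'c set \<Rightarrow> ('c \<Rightarrow> 'c \<Rightarrow> 'w) \<Rightarrow> bool" where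
  "spherical_building G S Ch \<delta> \<longleftrightarrow> w_building G S Ch \<delta> \<and> finite (carrier G)"

definition panel :: "'w set \<Rightarrow> 'c set \<Rightarrow> ('c \<Rightarrow> 'c \<Rightarrow> 'w) \<Rightarrow> 'c \<Rightarrow> 'w \<Rightarrow> 'c set" where
  "panel S Ch \<delta> C s = insert C {D \<in> Ch. \<delta> C D = s}"

definition infinitely_thick ::
  "'w set \<Rightarrow> 'c set \<Rightarrow> ('c \<Rightarrow> 'c \<Rightarrow> 'w) \<Rightarrow> bool" where
  "infinitely_thick S Ch \<delta> \<longleftrightarrow> (\<forall>C\<in>Ch. \<forall>s\<in>S. infinite (panel S Ch \<delta> C s))"

text \<open>In a spherical building, C and D are opposite iff delta(C,D) is the longest
element w0 of W, i.e. has maximal length.\<close>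
definition opposite ::
  "('w, 'm) monoid_scheme \<Rightarrow> 'w set \<Rightarrow> ('c \<Rightarrow> 'c \<Rightarrow> 'w) \<Rightarrow> 'c \<Rightarrow> 'c \<Rightarrow> bool" where
  "opposite G S \<delta> C D \<longleftrightarrow> (\<forall>w\<in>carrier G. cox_len G S w \<le> cox_len G S (\<delta> C D))"

text \<open>Apartments (complete system): images of W-isometries W \<rightarrow> Ch.\<close>
definition apartment ::
  "('w, 'm) monoid_scheme \<Rightarrow> 'c set \<Rightarrow> ('c \<Rightarrow> 'c \<Rightarrow> 'w) \<Rightarrow> 'c set \<Rightarrow> bool" where
  "apartment G Ch \<delta> A \<longleftrightarrow>
     (\<exists>\<alpha>. \<alpha> \<in> carrier G \<rightarrow> Ch \<and>
        (\<forall>w\<in>carrier G. \<forall>w'\<in>carrier G. \<delta> (\<alpha> w) (\<alpha> w') = inv\<^bsub>G\<^esub> w \<otimes>\<^bsub>G\<^esub> w') \<and>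
        A = \<alpha> ` carrier G)"

definition opp_contains ::
  "('w, 'm) monoid_scheme \<Rightarrow> 'w set \<Rightarrow> ('c \<Rightarrow> 'c \<Rightarrow> 'w) \<Rightarrow> 'c \<Rightarrow> 'c set \<Rightarrow> bool" where
  "opp_contains G S \<delta> C A \<longleftrightarrow> (\<forall>D\<in>A. opposite G S \<delta> C D)"

end

theory Submission
  imports Defs
begin

text \<open>Let \<open>w0\<close> be the longest element of the finite Weyl group. By the strong exchange
  condition every \<open>x\<close> is a prefix of \<open>w0\<close>, i.e. \<open>len (inv x \<otimes> w0) + len x = len w0\<close>.
  Hence, for chambers \<open>D\<close>, \<open>E\<close> with \<open>\<delta> D E = w0\<close>, each \<open>x\<close> determines a unique chamber
  on a minimal gallery from \<open>D\<close> to \<open>E\<close> at distance \<open>x\<close> from \<open>D\<close>; these chambers form an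
  apartment.

  To find a chamber opposite every chamber of a finite set \<open>A\<close>, take \<open>C\<close> minimising the
  total deficit \<open>\<Sum>D\<in>A. len w0 - len (\<delta> C D)\<close>. If some \<open>\<delta> C D\<close> is not longest, it has a
  left ascent \<open>s\<close>. Among the infinitely many chambers \<open>s\<close>-adjacent to \<open>C\<close>, at most one per
  chamber \<open>D'\<close> of \<open>A\<close> is closer to \<open>D'\<close> than \<open>C\<close> is; any other one is farther from \<open>D\<close>
  and has smaller deficit.\<close>

section \<open>Coxeter groups\<close>

abbreviation delete_nth :: "nat \<Rightarrow> 'a list \<Rightarrow> 'a list" where
  "delete_nth i xs \<equiv> take i xs @ drop (Suc i) xs"

lemma delete_nth_append:
  "delete_nth i (xs @ ys) =
    (if i < length xs then delete_nth i xs @ ys else xs @ delete_nth (i - length xs) ys)"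
  by (simp add: Suc_diff_le)

lemma (in group) inv_mult_cancel_left [simp]:
  "u \<in> carrier G \<Longrightarrow> x \<in> carrier G \<Longrightarrow> inv u \<otimes> (u \<otimes> x) = x"
  by (simp add: m_assoc [symmetric])

lemma (in group) mult_inv_cancel_left [simp]:
  "u \<in> carrier G \<Longrightarrow> x \<in> carrier G \<Longrightarrow> u \<otimes> (inv u \<otimes> x) = x"
  by (simp add: m_assoc [symmetric])

locale coxeter_group = group G for G :: "('w, 'm) monoid_scheme" (structure) +
  fixes S :: "'w set"
  assumes coxeter: "coxeter_system G S"
begin

abbreviation len :: "'w \<Rightarrow> nat" where "len \<equiv> cox_len G S"

lemma gen_closed [simp]: "s \<in> S \<Longrightarrow> s \<in> carrier G"
  using coxeter unfolding coxeter_system_def by auto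

lemma gen_square: "s \<in> S \<Longrightarrow> s \<otimes> s = \<one>"
  using coxeter unfolding coxeter_system_def by auto

lemma gen_neq_one: "s \<in> S \<Longrightarrow> s \<noteq> \<one>"
  using coxeter unfolding coxeter_system_def by auto

lemma inv_gen [simp]: "s \<in> S \<Longrightarrow> inv s = s"
  using gen_square by (simp add: inv_char)

lemma gen_cancel_left [simp]: "s \<in> S \<Longrightarrow> w \<in> carrier G \<Longrightarrow> s \<otimes> (s \<otimes> w) = w"
  by (simp add: m_assoc [symmetric] gen_square)

lemma gen_cancel_right [simp]: "s \<in> S \<Longrightarrow> w \<in> carrier G \<Longrightarrow> w \<otimes> s \<otimes> s = w"
  by (simp add: m_assoc gen_square)

lemma exchange:
  "\<lbrakk>set xs \<subseteq> S; length xs = len (wprod G xs); s \<in> S; len (s \<otimes> wprod G xs) \<le> length xs\<rbrakk>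
   \<Longrightarrow> \<exists>i < length xs. s \<otimes> wprod G xs = wprod G (delete_nth i xs)"
  using coxeter unfolding coxeter_system_def by blast

lemma wprod_Nil [simp]: "wprod G [] = \<one>"
  by (simp add: wprod_def)

lemma wprod_Cons [simp]: "wprod G (s # xs) = s \<otimes> wprod G xs"
  by (simp add: wprod_def)

lemma wprod_closed [simp]: "set xs \<subseteq> S \<Longrightarrow> wprod G xs \<in> carrier G"
  by (induction xs) auto

lemma wprod_append: "set xs \<subseteq> S \<Longrightarrow> set ys \<subseteq> S \<Longrightarrow> wprod G (xs @ ys) = wprod G xs \<otimes> wprod G ys"
  by (induction xs) (auto simp: m_assoc)

lemma wprod_snoc: "set xs \<subseteq> S \<Longrightarrow> s \<in> S \<Longrightarrow> wprod G (xs @ [s]) = wprod G xs \<otimes> s"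
  by (simp add: wprod_append)

lemma set_delete_nth_subset: "set xs \<subseteq> S \<Longrightarrow> set (delete_nth i xs) \<subseteq> S"
  using set_take_subset [of i xs] set_drop_subset [of "Suc i" xs] by auto

lemma inv_wprod: "set xs \<subseteq> S \<Longrightarrow> inv (wprod G xs) = wprod G (rev xs)"
  by (induction xs) (auto simp: inv_mult_group wprod_snoc)

lemma exists_word: "w \<in> carrier G \<Longrightarrow> \<exists>xs. set xs \<subseteq> S \<and> wprod G xs = w"
proof -
  assume "w \<in> carrier G"
  then have "w \<in> generate G S"
    using coxeter unfolding coxeter_system_def by simp
  then show ?thesis
  proof (induction rule: generate.induct)
    case one
    show ?case by (intro exI [of _ "[]"]) simp
  next
    case (incl s)
    then show ?case by (intro exI [of _ "[s]"]) simp
  next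
    case (inv s)
    then show ?case by (intro exI [of _ "[s]"]) simp
  next
    case (eng u v)
    then obtain xs ys where "set xs \<subseteq> S" "wprod G xs = u" "set ys \<subseteq> S" "wprod G ys = v"
      by blast
    then show ?case by (intro exI [of _ "xs @ ys"]) (simp add: wprod_append)
  qed
qed

lemma len_le_length: "set xs \<subseteq> S \<Longrightarrow> len (wprod G xs) \<le> length xs"
  unfolding cox_len_def by (rule Least_le) blast

lemma exists_reduced_word:
  "w \<in> carrier G \<Longrightarrow> \<exists>xs. set xs \<subseteq> S \<and> wprod G xs = w \<and> length xs = len w"
proof -
  assume "w \<in> carrier G"
  then have "\<exists>n xs. set xs \<subseteq> S \<and> length xs = n \<and> wprod G xs = w"
    using exists_word by blast
  from LeastI_ex [OF this] show ?thesis
    unfolding cox_len_def by blast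
qed

lemma len_one [simp]: "len \<one> = 0"
  using len_le_length [of "[]"] by simp

lemma len_eq_0_iff: "w \<in> carrier G \<Longrightarrow> len w = 0 \<longleftrightarrow> w = \<one>"
  using exists_reduced_word by fastforce

lemma len_gen: "s \<in> S \<Longrightarrow> len s = 1"
  using len_le_length [of "[s]"] len_eq_0_iff [of s] gen_neq_one by fastforce

lemma len_mult_le: "u \<in> carrier G \<Longrightarrow> v \<in> carrier G \<Longrightarrow> len (u \<otimes> v) \<le> len u + len v"
proof -
  assume "u \<in> carrier G" "v \<in> carrier G"
  then obtain xs ys where "set xs \<subseteq> S" "wprod G xs = u" "length xs = len u"
    and "set ys \<subseteq> S" "wprod G ys = v" "length ys = len v"
    using exists_reduced_word by meson
  then show ?thesis
    using len_le_length [of "xs @ ys"] by (simp add: wprod_append)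
qed

lemma len_inv [simp]: "w \<in> carrier G \<Longrightarrow> len (inv w) = len w"
proof -
  have le: "len (inv w) \<le> len w" if w: "w \<in> carrier G" for w
  proof -
    obtain xs where "set xs \<subseteq> S" "wprod G xs = w" "length xs = len w"
      using exists_reduced_word [OF w] by blast
    then show ?thesis
      using len_le_length [of "rev xs"] inv_wprod [of xs] by simp
  qed
  assume "w \<in> carrier G"
  then show ?thesis
    using le [of w] le [of "inv w"] by simp
qed

lemma len_gen_mult_neq: "s \<in> S \<Longrightarrow> w \<in> carrier G \<Longrightarrow> len (s \<otimes> w) \<noteq> len w"
proof
  assume s: "s \<in> S" and w: "w \<in> carrier G" and eq: "len (s \<otimes> w) = len w"
  obtain xs where xs: "set xs \<subseteq> S" "wprod G xs = w" "length xs = len w"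
    using exists_reduced_word [OF w] by blast
  then obtain i where "i < length xs" "s \<otimes> w = wprod G (delete_nth i xs)"
    using exchange [of xs s] s eq by auto
  then show False
    using len_le_length [OF set_delete_nth_subset [OF xs(1)], of i] eq xs by simp
qed

lemma len_gen_mult:
  assumes "s \<in> S" "w \<in> carrier G"
  shows "len (s \<otimes> w) = len w + 1 \<or> len (s \<otimes> w) + 1 = len w"
proof -
  have "len (s \<otimes> w) \<le> len w + 1" "len (s \<otimes> (s \<otimes> w)) \<le> len (s \<otimes> w) + 1"
    using assms len_mult_le [of s w] len_mult_le [of s "s \<otimes> w"] by (simp_all add: len_gen)
  then show ?thesis
    using assms len_gen_mult_neq by fastforce
qed

lemma len_mult_gen:
  assumes "s \<in> S" "w \<in> carrier G"
  shows "len (w \<otimes> s) = len w + 1 \<or> len (w \<otimes> s) + 1 = len w"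
proof -
  have "len (w \<otimes> s) = len (s \<otimes> inv w)"
    using assms len_inv [of "w \<otimes> s"] by (simp add: inv_mult_group)
  then show ?thesis
    using assms len_gen_mult [of s "inv w"] by simp
qed

lemma folding:
  assumes s: "s \<in> S" and r: "r \<in> S" and w: "w \<in> carrier G"
    and up: "len w < len (s \<otimes> w)" and down: "len (s \<otimes> (w \<otimes> r)) < len (w \<otimes> r)"
  shows "w \<otimes> r = s \<otimes> w"
  using len_mult_gen [OF r w]
proof
  assume wr: "len (w \<otimes> r) = len w + 1"
  obtain xs where xs: "set xs \<subseteq> S" "wprod G xs = w" "length xs = len w"
    using exists_reduced_word [OF w] by blast
  let ?ys = "xs @ [r]"
  have ys: "set ?ys \<subseteq> S" "wprod G ?ys = w \<otimes> r"
    using xs r by (auto simp: wprod_snoc)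
  moreover have "length ?ys = len (wprod G ?ys)" "len (s \<otimes> wprod G ?ys) \<le> length ?ys"
    using ys(2) xs(3) wr down by simp_all
  ultimately obtain i where i: "i < length ?ys" "s \<otimes> (w \<otimes> r) = wprod G (delete_nth i ?ys)"
    using exchange [of ?ys s] s by auto
  show ?thesis
  proof (cases "i < length xs")
    case True
    let ?d = "delete_nth i xs"
    have d: "set ?d \<subseteq> S"
      using set_delete_nth_subset [OF xs(1)] .
    have "delete_nth i ?ys = ?d @ [r]"
      unfolding delete_nth_append [of i xs "[r]"] using True by (simp only: if_True)
    then have "s \<otimes> w \<otimes> r = wprod G ?d \<otimes> r"
      using i(2) s w r wprod_snoc [OF d r] by (simp only: m_assoc gen_closed)
    then have "s \<otimes> w = wprod G ?d"
      using s w r d by simp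
    then have "len (s \<otimes> w) < len w"
      using len_le_length [OF d] True xs(3) by simp
    then show ?thesis
      using up by simp
  next
    case False
    then have "delete_nth i ?ys = xs"
      using i(1) by simp
    then have "s \<otimes> (s \<otimes> (w \<otimes> r)) = s \<otimes> w"
      using i(2) xs(2) by simp
    then show ?thesis
      using s r w by simp
  qed
next
  assume "len (w \<otimes> r) + 1 = len w"
  moreover have "len (s \<otimes> w) \<le> len (s \<otimes> (w \<otimes> r)) + 1"
    using len_mult_le [of "s \<otimes> (w \<otimes> r)" r] len_gen [OF r] s r w by (simp add: m_assoc)
  ultimately show ?thesis
    using up down by simp
qed

section \<open>Reflections and the strong exchange condition\<close>

definition reflection :: "'w \<Rightarrow> 'w \<Rightarrow> 'w" where
  "reflection u s = u \<otimes> s \<otimes> inv u"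

text \<open>The side of the wall of \<open>reflection u s\<close> that contains \<open>u\<close>.\<close>
definition half_space :: "'w \<Rightarrow> 'w \<Rightarrow> 'w set" where
  "half_space u s = {w \<in> carrier G. len (inv u \<otimes> w) < len (s \<otimes> (inv u \<otimes> w))}"

lemma reflection_closed [simp]: "u \<in> carrier G \<Longrightarrow> s \<in> S \<Longrightarrow> reflection u s \<in> carrier G"
  by (simp add: reflection_def)

lemma reflection_square:
  assumes "u \<in> carrier G" "s \<in> S"
    and "w \<in> carrier G"
  shows "reflection u s \<otimes> (reflection u s \<otimes> w) = w"
  using assms by (simp add: reflection_def m_assoc)

lemma inv_mult_reflection:
  "u \<in> carrier G \<Longrightarrow> s \<in> S \<Longrightarrow> w \<in> carrier G \<Longrightarrow>
    inv u \<otimes> (reflection u s \<otimes> w) = s \<otimes> (inv u \<otimes> w)"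
  by (simp add: reflection_def m_assoc)

lemma reflection_mult_in_half_space_iff:
  assumes u: "u \<in> carrier G" and s: "s \<in> S" and w: "w \<in> carrier G"
  shows "reflection u s \<otimes> w \<in> half_space u s \<longleftrightarrow> w \<notin> half_space u s"
  using len_gen_mult_neq [of s "inv u \<otimes> w"] assms
  by (auto simp: half_space_def inv_mult_reflection)

lemma wall_crossing:
  assumes u: "u \<in> carrier G" and s: "s \<in> S" and w: "w \<in> carrier G" and r: "r \<in> S"
    and crosses: "w \<in> half_space u s \<longleftrightarrow> w \<otimes> r \<notin> half_space u s"
  shows "w \<otimes> r = reflection u s \<otimes> w"
proof -
  have leaving: "w \<otimes> r = reflection u s \<otimes> w"
    if w: "w \<in> carrier G" "w \<in> half_space u s" "w \<otimes> r \<notin> half_space u s" for w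
  proof -
    let ?v = "inv u \<otimes> w"
    have v: "?v \<in> carrier G"
      using u w by simp
    have "len ?v < len (s \<otimes> ?v)"
      using w unfolding half_space_def by auto
    moreover have "len (s \<otimes> (?v \<otimes> r)) < len (?v \<otimes> r)"
      using w r u len_gen_mult_neq [of s "?v \<otimes> r"] s
      unfolding half_space_def by (auto simp: m_assoc)
    ultimately have swap: "?v \<otimes> r = s \<otimes> ?v"
      using folding [OF s r v] by simp
    have "w \<otimes> r = u \<otimes> (?v \<otimes> r)"
      using u w r by (simp add: m_assoc)
    also have "\<dots> = u \<otimes> (s \<otimes> ?v)"
      by (simp only: swap)
    also have "\<dots> = reflection u s \<otimes> w"
      using u s w by (simp add: reflection_def m_assoc)
    finally show ?thesis .
  qed
  show ?thesis
  proof (cases "w \<in> half_space u s")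
    case True
    then show ?thesis using leaving w crosses by blast
  next
    case False
    then have "w \<otimes> r \<otimes> r = reflection u s \<otimes> (w \<otimes> r)"
      using leaving [of "w \<otimes> r"] w r crosses by simp
    then have reflected: "reflection u s \<otimes> (w \<otimes> r) = w"
      using w r by simp
    have "reflection u s \<otimes> w = reflection u s \<otimes> (reflection u s \<otimes> (w \<otimes> r))"
      by (simp only: reflected)
    also have "\<dots> = w \<otimes> r"
      using reflection_square u s w r by simp
    finally show ?thesis ..
  qed
qed

lemma reflection_deletes_letter:
  assumes u: "u \<in> carrier G" and s: "s \<in> S"
  shows "\<lbrakk>set xs \<subseteq> S; a \<in> carrier G; a \<in> half_space u s \<longleftrightarrow> a \<otimes> wprod G xs \<notin> half_space u s\<rbrakk>
    \<Longrightarrow> \<exists>i < length xs. reflection u s \<otimes> (a \<otimes> wprod G xs) = a \<otimes> wprod G (delete_nth i xs)"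
proof (induction xs arbitrary: a)
  case Nil
  then show ?case by simp
next
  case (Cons r ys)
  then have r: "r \<in> S" and ys: "set ys \<subseteq> S"
    by auto
  show ?case
  proof (cases "a \<in> half_space u s \<longleftrightarrow> a \<otimes> r \<notin> half_space u s")
    case True
    then have "a \<otimes> r = reflection u s \<otimes> a"
      using wall_crossing [OF u s _ r] Cons.prems by blast
    then have "a \<otimes> wprod G (r # ys) = reflection u s \<otimes> (a \<otimes> wprod G ys)"
      using u s r ys Cons.prems by (simp add: m_assoc [symmetric])
    then have "reflection u s \<otimes> (a \<otimes> wprod G (r # ys)) = a \<otimes> wprod G ys"
      using u s ys Cons.prems by (simp add: reflection_square)
    then show ?thesis by fastforce
  next
    case False
    then have "a \<otimes> r \<in> half_space u s \<longleftrightarrow> a \<otimes> r \<otimes> wprod G ys \<notin> half_space u s"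
      using Cons.prems by (simp add: m_assoc)
    then obtain i where "i < length ys"
      "reflection u s \<otimes> (a \<otimes> r \<otimes> wprod G ys) = a \<otimes> r \<otimes> wprod G (delete_nth i ys)"
      using Cons.IH [of "a \<otimes> r"] Cons.prems r ys by auto
    then show ?thesis
      using Cons.prems r set_delete_nth_subset [OF ys, of i]
      by (intro exI [of _ "Suc i"]) (simp add: m_assoc)
  qed
qed

lemma strong_exchange:
  assumes u: "u \<in> carrier G" and s: "s \<in> S" and w: "w \<in> carrier G"
    and shorter: "len (reflection u s \<otimes> w) \<le> len w" and xs: "set xs \<subseteq> S" "wprod G xs = w"
  shows "\<exists>i < length xs. reflection u s \<otimes> w = wprod G (delete_nth i xs)"
proof -
  let ?t = "reflection u s"
  have separated: "\<one> \<in> half_space u s \<longleftrightarrow> \<one> \<otimes> wprod G xs \<notin> half_space u s"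
  proof (rule ccontr)
    obtain ys where ys: "set ys \<subseteq> S" "wprod G ys = ?t \<otimes> w" "length ys = len (?t \<otimes> w)"
      using exists_reduced_word [of "?t \<otimes> w"] u s w by auto
    assume "\<not> ?thesis"
    then have "\<one> \<in> half_space u s \<longleftrightarrow> \<one> \<otimes> wprod G ys \<notin> half_space u s"
      using reflection_mult_in_half_space_iff [OF u s w] xs ys u s w by simp
    from reflection_deletes_letter [OF u s ys(1) one_closed this]
    obtain i where "i < length ys" "?t \<otimes> (\<one> \<otimes> wprod G ys) = \<one> \<otimes> wprod G (delete_nth i ys)"
      by blast
    moreover have "wprod G (delete_nth i ys) \<in> carrier G"
      using set_delete_nth_subset [OF ys(1)] by simp
    ultimately have i: "i < length ys" and "?t \<otimes> (?t \<otimes> w) = wprod G (delete_nth i ys)"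
      using ys(2) u s w by simp_all
    then have "w = wprod G (delete_nth i ys)"
      using reflection_square [OF u s w] by simp
    then have "len w \<le> length ys - 1"
      using len_le_length [OF set_delete_nth_subset [OF ys(1)], of i] i by simp
    then show False
      using shorter i ys(3) by simp
  qed
  show ?thesis
    using reflection_deletes_letter [OF u s xs(1) one_closed separated] set_delete_nth_subset [OF xs(1)] xs w
    by simp
qed

section \<open>The longest element\<close>

definition longest :: "'w \<Rightarrow> bool" where
  "longest w0 \<longleftrightarrow> w0 \<in> carrier G \<and> (\<forall>w \<in> carrier G. len w \<le> len w0)"

lemma finite_imp_exists_longest:
  assumes "finite (carrier G)"
  shows "\<exists>w0. longest w0"
proof -
  let ?L = "len ` carrier G"
  have fin: "finite ?L"
    using assms by simp
  moreover have "?L \<noteq> {}"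
    using one_closed by blast
  ultimately have "Max ?L \<in> ?L"
    by (rule Max_in)
  then obtain w0 where "w0 \<in> carrier G" "len w0 = Max ?L"
    by (metis imageE)
  then show ?thesis
    unfolding longest_def using Max_ge [OF fin] by auto
qed

lemma reduced_word_snoc:
  assumes "x \<in> carrier G" "len x = Suc n"
  shows "\<exists>bs s. set bs \<subseteq> S \<and> s \<in> S \<and> x = wprod G bs \<otimes> s \<and> len (wprod G bs) = n"
proof -
  obtain xs where xs: "set xs \<subseteq> S" "wprod G xs = x" "length xs = Suc n"
    using exists_reduced_word [OF assms(1)] assms(2) by auto
  then obtain bs s where bs: "xs = bs @ [s]"
    by (cases xs rule: rev_cases) auto
  then have bs_s: "set bs \<subseteq> S" "s \<in> S" "x = wprod G bs \<otimes> s"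
    using xs by (auto simp: wprod_snoc)
  then have "len (wprod G bs) \<le> n" "Suc n \<le> len (wprod G bs) + 1"
    using len_le_length [of bs] len_mult_le [of "wprod G bs" s] xs bs assms(2) by (simp_all add: len_gen)
  then show ?thesis
    using bs_s by auto
qed

text \<open>Were \<open>s\<close> an ascent of \<open>inv x \<otimes> w0\<close>, the strong exchange condition for the
  reflection \<open>x \<otimes> s \<otimes> inv x\<close>, which cannot lengthen \<open>w0\<close>, would delete a letter from a
  reduced word for \<open>x\<close> followed by one for \<open>inv x \<otimes> w0\<close>; either position contradicts an
  ascent.\<close>
lemma longest_prefix_step:
  assumes w0: "longest w0" and x: "x \<in> carrier G" and s: "s \<in> S"
    and up: "len (x \<otimes> s) = len x + 1" and split: "len (inv x \<otimes> w0) + len x = len w0"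
  shows "len (s \<otimes> (inv x \<otimes> w0)) + 1 = len (inv x \<otimes> w0)"
proof (rule ccontr)
  let ?y = "inv x \<otimes> w0"
  have w0_closed: "w0 \<in> carrier G" and y: "?y \<in> carrier G"
    using w0 x unfolding longest_def by auto
  assume "\<not> ?thesis"
  then have y_up: "len (s \<otimes> ?y) = len ?y + 1"
    using len_gen_mult [OF s y] by simp
  obtain bs where bs: "set bs \<subseteq> S" "wprod G bs = x" "length bs = len x"
    using exists_reduced_word [OF x] by blast
  obtain cs where cs: "set cs \<subseteq> S" "wprod G cs = ?y" "length cs = len ?y"
    using exists_reduced_word [OF y] by blast
  have "set (bs @ cs) \<subseteq> S" "wprod G (bs @ cs) = w0"
    using bs cs x w0_closed by (auto simp: wprod_append)
  moreover have "len (reflection x s \<otimes> w0) \<le> len w0"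
    using w0 x s unfolding longest_def by simp
  ultimately obtain i where "i < length (bs @ cs)"
    and exch: "reflection x s \<otimes> w0 = wprod G (delete_nth i (bs @ cs))"
    using strong_exchange [OF x s w0_closed] by blast
  have t_w0: "reflection x s \<otimes> w0 = x \<otimes> (s \<otimes> ?y)"
    using x s w0_closed by (simp add: reflection_def m_assoc)
  show False
  proof (cases "i < length bs")
    case True
    let ?d = "delete_nth i bs"
    have d: "set ?d \<subseteq> S"
      using set_delete_nth_subset [OF bs(1)] .
    have "delete_nth i (bs @ cs) = ?d @ cs"
      unfolding delete_nth_append [of i bs cs] using True by (simp only: if_True)
    then have "x \<otimes> s \<otimes> ?y = wprod G ?d \<otimes> ?y"
      using t_w0 exch d cs x s y by (simp add: wprod_append m_assoc)
    then have "x \<otimes> s = wprod G ?d"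
      using x s y d by simp
    then show False
      using len_le_length [OF d] up True bs by simp
  next
    case False
    let ?d = "delete_nth (i - length bs) cs"
    have d: "set ?d \<subseteq> S"
      using set_delete_nth_subset [OF cs(1)] .
    have "delete_nth i (bs @ cs) = bs @ ?d"
      unfolding delete_nth_append [of i bs cs] using False by (simp only: if_False)
    then have "x \<otimes> (s \<otimes> ?y) = x \<otimes> wprod G ?d"
      using t_w0 exch d bs by (simp add: wprod_append)
    then have "s \<otimes> ?y = wprod G ?d"
      using x s y d by simp
    then show False
      using len_le_length [OF d] y_up False \<open>i < length (bs @ cs)\<close> cs by simp
  qed
qed

lemma longest_len_split:
  assumes w0: "longest w0"
  shows "x \<in> carrier G \<Longrightarrow> len (inv x \<otimes> w0) + len x = len w0"
proof (induction "len x" arbitrary: x)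
  case 0
  then show ?case
    using w0 len_eq_0_iff unfolding longest_def by simp
next
  case (Suc n x)
  then obtain bs s where bs: "set bs \<subseteq> S" "s \<in> S" "x = wprod G bs \<otimes> s" "len (wprod G bs) = n"
    using reduced_word_snoc by metis
  let ?x = "wprod G bs"
  have x: "?x \<in> carrier G"
    using bs(1) by simp
  have "len (inv ?x \<otimes> w0) + n = len w0"
    using Suc.hyps(1) [OF _ x] bs(4) by simp
  moreover have "len (s \<otimes> (inv ?x \<otimes> w0)) + 1 = len (inv ?x \<otimes> w0)"
    using longest_prefix_step [OF w0 x bs(2)] bs Suc.hyps(2) calculation by simp
  moreover have "inv x \<otimes> w0 = s \<otimes> (inv ?x \<otimes> w0)"
    using bs x w0 unfolding longest_def by (simp add: inv_mult_group m_assoc)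
  ultimately show ?case
    using Suc.hyps(2) by simp
qed

lemma exists_ascent:
  assumes w0: "longest w0" and z: "z \<in> carrier G" and shorter: "len z < len w0"
  shows "\<exists>s \<in> S. len (s \<otimes> z) = len z + 1"
proof -
  let ?y = "w0 \<otimes> inv z"
  have w0_closed: "w0 \<in> carrier G" and y: "?y \<in> carrier G"
    using w0 z unfolding longest_def by auto
  have "len z + len ?y = len w0"
    using longest_len_split [OF w0 y] w0_closed z by (simp add: inv_mult_group m_assoc)
  then obtain n where n: "len ?y = Suc n"
    using shorter by (cases "len ?y") auto
  then obtain bs s where bs: "set bs \<subseteq> S" "s \<in> S" "?y = wprod G bs \<otimes> s" "len (wprod G bs) = n"
    using reduced_word_snoc [OF y] by blast
  have "w0 = w0 \<otimes> inv z \<otimes> z"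
    using w0_closed z by (simp add: m_assoc)
  also have "\<dots> = wprod G bs \<otimes> (s \<otimes> z)"
    using bs z by (simp add: m_assoc)
  finally have "len w0 \<le> n + len (s \<otimes> z)"
    using len_mult_le [of "wprod G bs" "s \<otimes> z"] bs z by simp
  then show ?thesis
    using len_gen_mult [OF bs(2) z] \<open>len z + len ?y = len w0\<close> n bs(2) by auto
qed

definition reduced :: "'w list \<Rightarrow> bool" where
  "reduced xs \<longleftrightarrow> set xs \<subseteq> S \<and> len (wprod G xs) = length xs"

lemma reduced_appendD:
  assumes "reduced (xs @ ys)"
  shows "reduced xs" "reduced ys"
proof -
  have S: "set xs \<subseteq> S" "set ys \<subseteq> S"
    using assms unfolding reduced_def by auto
  then have "len (wprod G (xs @ ys)) \<le> len (wprod G xs) + len (wprod G ys)"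
    using len_mult_le by (simp add: wprod_append)
  then show "reduced xs" "reduced ys"
    using assms S len_le_length [of xs] len_le_length [of ys] unfolding reduced_def by auto
qed

lemma reduced_Cons_ascent:
  assumes "reduced (s # xs)"
  shows "len (s \<otimes> wprod G xs) = len (wprod G xs) + 1"
  using assms reduced_appendD(2) [of "[s]" xs] unfolding reduced_def by simp

lemma longest_reduced_factorization:
  assumes w0: "longest w0" and x: "x \<in> carrier G"
  shows "\<exists>as bs. reduced (as @ bs) \<and> wprod G as = x \<and> wprod G bs = inv x \<otimes> w0"
proof -
  have y: "inv x \<otimes> w0 \<in> carrier G"
    using w0 x unfolding longest_def by simp
  obtain as where as: "set as \<subseteq> S" "wprod G as = x" "length as = len x"
    using exists_reduced_word [OF x] by blast
  obtain bs where bs: "set bs \<subseteq> S" "wprod G bs = inv x \<otimes> w0" "length bs = len (inv x \<otimes> w0)"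
    using exists_reduced_word [OF y] by blast
  have "len (wprod G (as @ bs)) = length (as @ bs)"
    using as bs x w0 longest_len_split [OF w0 x] unfolding longest_def by (simp add: wprod_append)
  then have "reduced (as @ bs)"
    using as bs unfolding reduced_def by simp
  then show ?thesis
    using as bs by blast
qed

end

section \<open>W-metric buildings\<close>

locale w_metric_building = coxeter_group G S for G :: "('w, 'm) monoid_scheme" (structure) and S +
  fixes Ch :: "'c set" and \<delta> :: "'c \<Rightarrow> 'c \<Rightarrow> 'w"
  assumes building: "w_building G S Ch \<delta>"
begin

lemma delta_closed [simp]: "C \<in> Ch \<Longrightarrow> D \<in> Ch \<Longrightarrow> \<delta> C D \<in> carrier G"
  using building unfolding w_building_def by blast

lemma delta_eq_one_iff: "C \<in> Ch \<Longrightarrow> D \<in> Ch \<Longrightarrow> \<delta> C D = \<one> \<longleftrightarrow> C = D"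
  using building unfolding w_building_def by blast

lemma delta_self [simp]: "C \<in> Ch \<Longrightarrow> \<delta> C C = \<one>"
  using delta_eq_one_iff by blast

lemma delta_adjacent_cases:
  "\<lbrakk>C \<in> Ch; D \<in> Ch; C' \<in> Ch; s \<in> S; \<delta> C' C = s\<rbrakk> \<Longrightarrow> \<delta> C' D = s \<otimes> \<delta> C D \<or> \<delta> C' D = \<delta> C D"
  using building unfolding w_building_def by blast

lemma delta_adjacent_ascent:
  "\<lbrakk>C \<in> Ch; D \<in> Ch; C' \<in> Ch; s \<in> S; \<delta> C' C = s; len (s \<otimes> \<delta> C D) = len (\<delta> C D) + 1\<rbrakk>
   \<Longrightarrow> \<delta> C' D = s \<otimes> \<delta> C D"
  using building unfolding w_building_def by blast

lemma exists_adjacent_delta: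
  "\<lbrakk>C \<in> Ch; D \<in> Ch; s \<in> S\<rbrakk> \<Longrightarrow> \<exists>C' \<in> Ch. \<delta> C' C = s \<and> \<delta> C' D = s \<otimes> \<delta> C D"
  using building unfolding w_building_def by blast

lemma delta_adjacent_sym:
  assumes C: "C \<in> Ch" and C': "C' \<in> Ch" and s: "s \<in> S" and adj: "\<delta> C C' = s"
  shows "\<delta> C' C = s"
proof -
  have "\<one> = s \<otimes> \<delta> C' C \<or> \<one> = \<delta> C' C"
    using delta_adjacent_cases [OF C' C C s adj] C by simp
  then show ?thesis
  proof
    assume "\<one> = s \<otimes> \<delta> C' C"
    then have "s \<otimes> \<one> = s \<otimes> (s \<otimes> \<delta> C' C)"
      by simp
    then show ?thesis
      using s C C' by simp
  next
    assume "\<one> = \<delta> C' C"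
    then have "C' = C"
      using delta_eq_one_iff [OF C' C] by simp
    then show ?thesis
      using adj gen_neq_one [OF s] C by simp
  qed
qed

lemma delta_same_panel:
  assumes P: "P \<in> Ch" and Q: "Q \<in> Ch" and C: "C \<in> Ch" and s: "s \<in> S"
    and "\<delta> P C = s" "\<delta> Q C = s" "P \<noteq> Q"
  shows "\<delta> P Q = s"
proof -
  have "\<delta> P Q = s \<otimes> s \<or> \<delta> P Q = s"
    using delta_adjacent_cases [OF C Q P s] delta_adjacent_sym [OF Q C s] assms by simp
  then show ?thesis
    using gen_square [OF s] delta_eq_one_iff [OF P Q] \<open>P \<noteq> Q\<close> by auto
qed

lemma exists_chamber_with_delta:
  assumes "w \<in> carrier G" "E \<in> Ch"
  shows "\<exists>P \<in> Ch. \<delta> P E = w"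
proof -
  have "\<exists>P \<in> Ch. \<delta> P E = wprod G xs" if "set xs \<subseteq> S" for xs
    using that
  proof (induction xs)
    case Nil
    show ?case
      using assms(2) by (intro bexI [of _ E]) auto
  next
    case (Cons s xs)
    then obtain Q where "Q \<in> Ch" "\<delta> Q E = wprod G xs"
      by auto
    then show ?case
      using exists_adjacent_delta [of Q E s] Cons.prems assms(2) by auto
  qed
  then show ?thesis
    using exists_word [OF assms(1)] by blast
qed

lemma exists_opposite_pair:
  assumes "longest w0" "Ch \<noteq> {}"
  shows "\<exists>D \<in> Ch. \<exists>E \<in> Ch. opposite G S \<delta> D E"
proof -
  obtain E where E: "E \<in> Ch"
    using assms(2) by blast
  then obtain D where "D \<in> Ch" "\<delta> D E = w0"
    using exists_chamber_with_delta assms(1) unfolding longest_def by blast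
  then show ?thesis
    using E assms(1) unfolding longest_def opposite_def by blast
qed

lemma exists_reduced_midpoint:
  "\<lbrakk>reduced (as @ bs); D \<in> Ch; E \<in> Ch; \<delta> D E = wprod G (as @ bs)\<rbrakk>
   \<Longrightarrow> \<exists>P \<in> Ch. \<delta> D P = wprod G as \<and> \<delta> P E = wprod G bs"
proof (induction as arbitrary: D)
  case Nil
  then show ?case
    by (intro bexI [of _ D]) auto
next
  case (Cons a as)
  have a: "a \<in> S" and S: "set (as @ bs) \<subseteq> S"
    using Cons.prems(1) unfolding reduced_def by auto
  obtain D' where D': "D' \<in> Ch" "\<delta> D' D = a" "\<delta> D' E = wprod G (as @ bs)"
    using exists_adjacent_delta [OF Cons.prems(2,3) a] Cons.prems(4) a S by auto
  obtain P where P: "P \<in> Ch" "\<delta> D' P = wprod G as" "\<delta> P E = wprod G bs"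
    using Cons.IH [OF _ D'(1) Cons.prems(3) D'(3)] Cons.prems(1) reduced_appendD(2) [of "[a]"] by auto
  have "reduced (a # as)"
    using Cons.prems(1) reduced_appendD(1) [of "a # as" bs] by simp
  moreover have "\<delta> D D' = a"
    using delta_adjacent_sym [OF D'(1) Cons.prems(2) a D'(2)] .
  ultimately have "\<delta> D P = a \<otimes> wprod G as"
    using delta_adjacent_ascent [OF D'(1) P(1) Cons.prems(2) a] P(2) reduced_Cons_ascent by simp
  then show ?case
    using P by auto
qed

lemma delta_reduced_append:
  "\<lbrakk>reduced (as @ bs); C \<in> Ch; P \<in> Ch; E \<in> Ch; \<delta> C P = wprod G as; \<delta> P E = wprod G bs\<rbrakk>
   \<Longrightarrow> \<delta> C E = wprod G (as @ bs)"
proof (induction as arbitrary: C)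
  case Nil
  then show ?case
    by (simp add: delta_eq_one_iff)
next
  case (Cons a as)
  have a: "a \<in> S"
    using Cons.prems(1) unfolding reduced_def by auto
  obtain C' where C': "C' \<in> Ch" "\<delta> C C' = a" "\<delta> C' P = wprod G as"
    using exists_reduced_midpoint [of "[a]" as C P] Cons.prems reduced_appendD(1) [of "a # as" bs] a by auto
  have "\<delta> C' E = wprod G (as @ bs)"
    using Cons.IH [OF _ C'(1) Cons.prems(3,4) C'(3) Cons.prems(6)] Cons.prems(1) reduced_appendD(2) [of "[a]"]
    by auto
  then show ?case
    using delta_adjacent_ascent [OF C'(1) Cons.prems(4,2) a C'(2)] reduced_Cons_ascent [of a "as @ bs"]
      Cons.prems(1) by simp
qed

lemma reduced_midpoint_unique:
  "\<lbrakk>reduced (as @ bs); D \<in> Ch; E \<in> Ch; P \<in> Ch; Q \<in> Ch;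
    \<delta> D P = wprod G as; \<delta> P E = wprod G bs; \<delta> D Q = wprod G as; \<delta> Q E = wprod G bs\<rbrakk>
   \<Longrightarrow> P = Q"
proof (induction as arbitrary: D)
  case Nil
  then show ?case
    by (simp add: delta_eq_one_iff)
next
  case (Cons a as)
  have a: "a \<in> S" and red: "reduced (a # as)" "reduced (as @ bs)"
    using Cons.prems(1) reduced_appendD [of "a # as" bs] reduced_appendD(2) [of "[a]" "as @ bs"]
    unfolding reduced_def by auto
  have first_step: "\<exists>D' \<in> Ch. \<delta> D' D = a \<and> \<delta> D' R = wprod G as \<and> \<delta> D' E = wprod G (as @ bs)"
    if R: "R \<in> Ch" "\<delta> D R = wprod G (a # as)" "\<delta> R E = wprod G bs" for R
  proof -
    obtain D' where D': "D' \<in> Ch" "\<delta> D D' = a" "\<delta> D' R = wprod G as"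
      using exists_reduced_midpoint [of "[a]" as D R] red(1) Cons.prems(2) R a by auto
    then show ?thesis
      using delta_adjacent_sym [OF Cons.prems(2) D'(1) a] delta_reduced_append [OF red(2) D'(1) R(1) Cons.prems(3)] R
      by auto
  qed
  obtain DP where DP: "DP \<in> Ch" "\<delta> DP D = a" "\<delta> DP P = wprod G as" "\<delta> DP E = wprod G (as @ bs)"
    using first_step [of P] Cons.prems(4,6,7) by blast
  obtain DQ where DQ: "DQ \<in> Ch" "\<delta> DQ D = a" "\<delta> DQ Q = wprod G as" "\<delta> DQ E = wprod G (as @ bs)"
    using first_step [of Q] Cons.prems(5,8,9) by blast
  have "DP = DQ"
  proof (rule ccontr)
    assume "DP \<noteq> DQ"
    then have "\<delta> DP DQ = a"
      using delta_same_panel [OF DP(1) DQ(1) Cons.prems(2) a DP(2) DQ(2)] by simp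
    then have "\<delta> DP E = a \<otimes> wprod G (as @ bs)"
      using delta_adjacent_ascent [OF DQ(1) Cons.prems(3) DP(1) a] DQ(4) reduced_Cons_ascent Cons.prems(1) by simp
    then show False
      using DP(4) a gen_neq_one red(2) unfolding reduced_def by simp
  qed
  then show ?case
    using Cons.IH [OF red(2) DP(1) Cons.prems(3-5) DP(3)] DQ(3) Cons.prems by simp
qed

end

section \<open>The apartment spanned by two opposite chambers\<close>

locale opposite_chambers = w_metric_building +
  fixes D E
  assumes D: "D \<in> Ch" and E: "E \<in> Ch" and opposite: "opposite G S \<delta> D E"
begin

lemma longest_delta: "longest (\<delta> D E)"
  using opposite D E unfolding opposite_def longest_def by simp

definition chamber_at where
  "chamber_at x = (THE P. P \<in> Ch \<and> \<delta> D P = x \<and> \<delta> P E = inv x \<otimes> \<delta> D E)"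

lemma chamber_at_unique:
  assumes x: "x \<in> carrier G"
  shows "\<exists>!P. P \<in> Ch \<and> \<delta> D P = x \<and> \<delta> P E = inv x \<otimes> \<delta> D E"
proof -
  obtain as bs where red: "reduced (as @ bs)" and as: "wprod G as = x" and bs: "wprod G bs = inv x \<otimes> \<delta> D E"
    using longest_reduced_factorization [OF longest_delta x] by blast
  have "\<delta> D E = wprod G (as @ bs)"
    using red as bs x D E unfolding reduced_def by (simp add: wprod_append)
  then obtain P where "P \<in> Ch" "\<delta> D P = wprod G as" "\<delta> P E = wprod G bs"
    using exists_reduced_midpoint [OF red D E] by blast
  then show ?thesis
    using reduced_midpoint_unique [OF red D E] as bs by (intro ex1I [of _ P]) auto
qed

lemma chamber_at_spec:
  assumes "x \<in> carrier G"
  shows "chamber_at x \<in> Ch" "\<delta> D (chamber_at x) = x" "\<delta> (chamber_at x) E = inv x \<otimes> \<delta> D E"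
  using theI' [OF chamber_at_unique [OF assms]] unfolding chamber_at_def by auto

lemma chamber_at_eqI:
  "\<lbrakk>x \<in> carrier G; P \<in> Ch; \<delta> D P = x; \<delta> P E = inv x \<otimes> \<delta> D E\<rbrakk> \<Longrightarrow> chamber_at x = P"
  using chamber_at_unique chamber_at_spec by blast

lemma delta_chamber_at_mult_ascent:
  assumes x: "x \<in> carrier G" and t: "t \<in> S" and up: "len (x \<otimes> t) = len x + 1"
  shows "\<delta> (chamber_at x) (chamber_at (x \<otimes> t)) = t"
proof -
  let ?w0 = "\<delta> D E" and ?P' = "chamber_at (x \<otimes> t)" and ?y = "inv (x \<otimes> t) \<otimes> \<delta> D E"
  have xt: "x \<otimes> t \<in> carrier G" and w0: "?w0 \<in> carrier G"
    using x t D E by simp_all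
  obtain as where as: "set as \<subseteq> S" "wprod G as = x" "length as = len x"
    using exists_reduced_word [OF x] by blast
  have "reduced (as @ [t])"
    using as t up unfolding reduced_def by (simp add: wprod_snoc)
  moreover have "\<delta> D ?P' = wprod G (as @ [t])"
    using chamber_at_spec(2) [OF xt] as t by (simp add: wprod_snoc)
  ultimately obtain P where P: "P \<in> Ch" "\<delta> D P = x" "\<delta> P ?P' = t"
    using exists_reduced_midpoint [OF _ D chamber_at_spec(1) [OF xt]] as t by fastforce
  have "t \<otimes> ?y = inv x \<otimes> ?w0"
    using x t w0 by (simp add: inv_mult_group m_assoc)
  moreover have "len (t \<otimes> ?y) = len ?y + 1"
    using longest_len_split [OF longest_delta x] longest_len_split [OF longest_delta xt] up calculation
    by simp
  ultimately have "\<delta> P E = inv x \<otimes> ?w0"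
    using delta_adjacent_ascent [OF chamber_at_spec(1) [OF xt] E P(1) t P(3)] chamber_at_spec(3) [OF xt] by simp
  then have "chamber_at x = P"
    using chamber_at_eqI [OF x P(1,2)] by simp
  then show ?thesis
    using P(3) by simp
qed

lemma delta_chamber_at_mult_gen:
  assumes x: "x \<in> carrier G" and t: "t \<in> S"
  shows "\<delta> (chamber_at x) (chamber_at (x \<otimes> t)) = t"
  using len_mult_gen [OF t x]
proof
  assume "len (x \<otimes> t) = len x + 1"
  then show ?thesis
    using delta_chamber_at_mult_ascent [OF x t] by simp
next
  assume down: "len (x \<otimes> t) + 1 = len x"
  have xt: "x \<otimes> t \<in> carrier G"
    using x t by simp
  have "\<delta> (chamber_at (x \<otimes> t)) (chamber_at (x \<otimes> t \<otimes> t)) = t"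
    using delta_chamber_at_mult_ascent [OF xt t] down x t by simp
  then show ?thesis
    using delta_adjacent_sym [OF chamber_at_spec(1) [OF xt] chamber_at_spec(1) [OF x] t] x t by simp
qed

lemma delta_chamber_at:
  assumes u: "u \<in> carrier G" and v: "v \<in> carrier G"
  shows "\<delta> (chamber_at u) (chamber_at v) = inv u \<otimes> v"
proof -
  have along_word: "\<delta> (chamber_at u) (chamber_at (u \<otimes> wprod G zs)) = wprod G zs"
    if "reduced zs" "u \<in> carrier G" for zs u
    using that
  proof (induction zs arbitrary: u)
    case Nil
    then show ?case
      using chamber_at_spec(1) by simp
  next
    case (Cons z zs)
    have z: "z \<in> S" and zs: "set zs \<subseteq> S" "reduced zs"
      using Cons.prems(1) reduced_appendD(2) [of "[z]" zs] unfolding reduced_def by auto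
    have uz: "u \<otimes> z \<in> carrier G"
      using Cons.prems(2) z by simp
    have uzw: "u \<otimes> z \<otimes> wprod G zs \<in> carrier G"
      using uz zs by simp
    have "reduced ([z] @ zs)" "\<delta> (chamber_at u) (chamber_at (u \<otimes> z)) = wprod G [z]"
      using Cons.prems delta_chamber_at_mult_gen [OF Cons.prems(2) z] z by simp_all
    then have "\<delta> (chamber_at u) (chamber_at (u \<otimes> z \<otimes> wprod G zs)) = wprod G ([z] @ zs)"
      using delta_reduced_append [OF _ chamber_at_spec(1) [OF Cons.prems(2)]
          chamber_at_spec(1) [OF uz] chamber_at_spec(1) [OF uzw]] Cons.IH [OF zs(2) uz]
      by blast
    then show ?case
      using Cons.prems(2) z zs by (simp add: m_assoc)
  qed
  obtain zs where "set zs \<subseteq> S" "wprod G zs = inv u \<otimes> v" "length zs = len (inv u \<otimes> v)"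
    using exists_reduced_word [of "inv u \<otimes> v"] u v by auto
  then show ?thesis
    using along_word [of zs u] u v unfolding reduced_def by simp
qed

lemma apartment_chamber_at: "apartment G Ch \<delta> (chamber_at ` carrier G)"
  unfolding apartment_def using chamber_at_spec(1) delta_chamber_at by (intro exI [of _ chamber_at]) auto

end

section \<open>Chambers opposite a finite set\<close>

context w_metric_building
begin

lemma descending_neighbour_unique:
  assumes C: "C \<in> Ch" and D: "D \<in> Ch" and s: "s \<in> S" and Q1: "Q1 \<in> Ch" and Q2: "Q2 \<in> Ch"
    and "\<delta> C Q1 = s" "\<delta> C Q2 = s" "\<delta> Q1 D = s \<otimes> \<delta> C D" "\<delta> Q2 D = s \<otimes> \<delta> C D"
    and down: "len (s \<otimes> \<delta> C D) + 1 = len (\<delta> C D)"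
  shows "Q1 = Q2"
proof (rule ccontr)
  assume "Q1 \<noteq> Q2"
  then have "\<delta> Q1 Q2 = s"
    using delta_same_panel [OF Q1 Q2 C s] delta_adjacent_sym [OF C _ s] assms by simp
  moreover have "len (s \<otimes> \<delta> Q2 D) = len (\<delta> Q2 D) + 1"
    using assms by simp
  ultimately have "\<delta> Q1 D = s \<otimes> \<delta> Q2 D"
    using delta_adjacent_ascent [OF Q2 D Q1 s] by simp
  then show False
    using assms gen_neq_one [OF s] by simp
qed

lemma exists_neighbour_moving_away:
  assumes thick: "infinitely_thick S Ch \<delta>" and A: "finite A" "A \<subseteq> Ch" and C: "C \<in> Ch" and s: "s \<in> S"
  shows "\<exists>C' \<in> Ch. \<forall>D \<in> A.
    \<delta> C' D = (if len (s \<otimes> \<delta> C D) = len (\<delta> C D) + 1 then s \<otimes> \<delta> C D else \<delta> C D)"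
proof -
  let ?bad = "\<lambda>D. {Q \<in> Ch. \<delta> C Q = s \<and> \<delta> Q D = s \<otimes> \<delta> C D \<and> len (s \<otimes> \<delta> C D) + 1 = len (\<delta> C D)}"
  have "finite (?bad D)" if D: "D \<in> A" for D
  proof (cases "?bad D = {}")
    case False
    then obtain Q where Q: "Q \<in> ?bad D"
      by blast
    have "?bad D \<subseteq> {Q}"
      using descending_neighbour_unique [OF C _ s _ _] Q D A(2) by blast
    then show ?thesis
      by (rule finite_subset) simp
  qed (simp only: finite.emptyI)
  then have "finite (\<Union>D \<in> A. ?bad D)"
    using A(1) by blast
  moreover have "infinite {Q \<in> Ch. \<delta> C Q = s}"
    using thick C s unfolding infinitely_thick_def panel_def by auto
  ultimately have "{Q \<in> Ch. \<delta> C Q = s} - (\<Union>D \<in> A. ?bad D) \<noteq> {}"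
    using Diff_infinite_finite infinite_imp_nonempty by blast
  then obtain Q where Q: "Q \<in> Ch" "\<delta> C Q = s" "Q \<notin> (\<Union>D \<in> A. ?bad D)"
    by blast
  have QC: "\<delta> Q C = s"
    using delta_adjacent_sym [OF C Q(1) s Q(2)] .
  show ?thesis
  proof (intro bexI [OF _ Q(1)] ballI)
    fix D
    assume "D \<in> A"
    then have D: "D \<in> Ch"
      using A(2) by blast
    show "\<delta> Q D = (if len (s \<otimes> \<delta> C D) = len (\<delta> C D) + 1 then s \<otimes> \<delta> C D else \<delta> C D)"
    proof (cases "len (s \<otimes> \<delta> C D) = len (\<delta> C D) + 1")
      case True
      then show ?thesis
        using delta_adjacent_ascent [OF C D Q(1) s QC] by simp
    next
      case False
      then have "len (s \<otimes> \<delta> C D) + 1 = len (\<delta> C D)"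
        using len_gen_mult [OF s delta_closed [OF C D]] by simp
      then have "\<delta> Q D \<noteq> s \<otimes> \<delta> C D"
        using Q \<open>D \<in> A\<close> by blast
      then show ?thesis
        using delta_adjacent_cases [OF C D Q(1) s QC] False by simp
    qed
  qed
qed

lemma exists_chamber_opposite_finite_set:
  assumes thick: "infinitely_thick S Ch \<delta>" and fin: "finite (carrier G)"
    and A: "finite A" "A \<subseteq> Ch" and nonempty: "Ch \<noteq> {}"
  shows "\<exists>C \<in> Ch. \<forall>D \<in> A. opposite G S \<delta> C D"
proof -
  obtain w0 where w0: "longest w0"
    using finite_imp_exists_longest [OF fin] by blast
  define deficit where "deficit C = (\<Sum>D \<in> A. len w0 - len (\<delta> C D))" for C
  obtain C0 where "C0 \<in> Ch"
    using nonempty by blast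
  then obtain C where C: "C \<in> Ch" and minimal: "\<And>C'. C' \<in> Ch \<Longrightarrow> deficit C \<le> deficit C'"
    using ex_has_least_nat [of "\<lambda>C. C \<in> Ch" C0 deficit] by blast
  have opposite_C: "len (\<delta> C D) = len w0" if D: "D \<in> A" for D
  proof (rule ccontr)
    have D_Ch: "D \<in> Ch"
      using D A(2) by blast
    assume "len (\<delta> C D) \<noteq> len w0"
    moreover have "len (\<delta> C D) \<le> len w0"
      using w0 C D_Ch unfolding longest_def by simp
    ultimately have shorter: "len (\<delta> C D) < len w0"
      by simp
    then obtain s where s: "s \<in> S" "len (s \<otimes> \<delta> C D) = len (\<delta> C D) + 1"
      using exists_ascent [OF w0 delta_closed [OF C D_Ch]] by blast
    obtain C' where C': "C' \<in> Ch" and lift: "\<And>D'. D' \<in> A \<Longrightarrow>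
      \<delta> C' D' = (if len (s \<otimes> \<delta> C D') = len (\<delta> C D') + 1 then s \<otimes> \<delta> C D' else \<delta> C D')"
      using exists_neighbour_moving_away [OF thick A C s(1)] by blast
    have "deficit C' < deficit C"
      unfolding deficit_def
    proof (rule sum_strict_mono_ex1 [OF A(1)])
      show "\<forall>D' \<in> A. len w0 - len (\<delta> C' D') \<le> len w0 - len (\<delta> C D')"
        using lift by (simp add: diff_le_mono2)
      show "\<exists>D' \<in> A. len w0 - len (\<delta> C' D') < len w0 - len (\<delta> C D')"
        using lift [OF D] s(2) shorter by (intro bexI [OF _ D]) simp
    qed
    then show False
      using minimal [OF C'] by simp
  qed
  have "opposite G S \<delta> C D" if "D \<in> A" for D
    using w0 opposite_C [OF that] unfolding opposite_def longest_def by simp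
  then show ?thesis
    using C by blast
qed

end

theorem lemma4p13:
  fixes G :: "('w, 'm) monoid_scheme" and S :: "'w set"
    and Ch :: "'c set" and \<delta> :: "'c \<Rightarrow> 'c \<Rightarrow> 'w"
  assumes "spherical_building G S Ch \<delta>"
    and "Ch \<noteq> {}"
    and "infinitely_thick S Ch \<delta>"
  shows "\<exists>C\<in>Ch. \<exists>A. apartment G Ch \<delta> A \<and> opp_contains G S \<delta> C A"
proof -
  have building: "w_building G S Ch \<delta>" and fin: "finite (carrier G)"
    using assms(1) unfolding spherical_building_def by auto
  then have coxeter: "coxeter_system G S"
    unfolding w_building_def by simp
  then have "group G"
    unfolding coxeter_system_def by simp
  then interpret w_metric_building G S Ch \<delta>
    using coxeter building
    by (intro w_metric_building.intro coxeter_group.intro coxeter_group_axioms.intro w_metric_building_axioms.intro)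
  obtain w0 where "longest w0"
    using finite_imp_exists_longest [OF fin] by blast
  then obtain D E where "D \<in> Ch" "E \<in> Ch" "opposite G S \<delta> D E"
    using exists_opposite_pair assms(2) by blast
  then interpret opposite_chambers G S Ch \<delta> D E
    by unfold_locales
  have "finite (chamber_at ` carrier G)" "chamber_at ` carrier G \<subseteq> Ch"
    using fin chamber_at_spec(1) by auto
  then obtain C where "C \<in> Ch" "\<forall>D \<in> chamber_at ` carrier G. opposite G S \<delta> C D"
    using exists_chamber_opposite_finite_set [OF assms(3) fin _ _ assms(2)] by blast
  then show ?thesis
    using apartment_chamber_at unfolding opp_contains_def by blast
qed

end
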